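(* Let $\varepsilon>0$ and let $P$ be a probability on $\mathbb{R}^d$ with a Lebesgue density $r_P$ such that $\log r_P\in L_1(P)$. Then $P*N_d(0,\tfrac{\varepsilon}{2}I_d)$ is the unique minimizer of $Q\mapsto\mathcal{W}^2_{2,\varepsilon}(P,Q)$ over the set of all probabilities $Q$ on $\mathbb{R}^d$.
   Context: For probabilities $P,Q$ on $\mathbb{R}^d$, $\Pi(P,Q)$ is the set of probabilities on $\mathbb{R}^d\times\mathbb{R}^d$ with marginals $P$ and $Q$. For a probability $\pi$ on $\mathbb{R}^d\times\mathbb{R}^d$, $H(\pi)=\int r(x,y)\log r(x,y)\,dx\,dy$ if $\pi$ has a Lebesgue density $r$, and $H(\pi)=+\infty$ otherwise. $\mathcal{W}^2_{2,\varepsilon}(P,Q)=\min_{\pi\in\Pi(P,Q)}\big[\int\|x-y\|^2\,d\pi(x,y)+\varepsilon H(\pi)\big]$. $*$ denotes convolution of measures and $N_d(0,\frac{\varepsilon}{2}I_d)$ the centered Gaussian on $\mathbb{R}^d$ with covariance $\frac{\varepsilon}{2}I_d$. *)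

theory Defs
  imports "HOL-Probability.Probability"
begin

definition is_prob :: "'a::euclidean_space measure \<Rightarrow> bool" where
  "is_prob Q \<longleftrightarrow> prob_space Q \<and> sets Q = sets borel"

definition couplings :: "'a::euclidean_space measure \<Rightarrow> 'a measure \<Rightarrow> ('a \<times> 'a) measure set" where
  "couplings P Q = {\<pi>. prob_space \<pi> \<and> sets \<pi> = sets borel \<and>
                       distr \<pi> borel fst = P \<and> distr \<pi> borel snd = Q}"

definition has_leb_density :: "'a::euclidean_space measure \<Rightarrow> ('a \<Rightarrow> real) \<Rightarrow> bool" where
  "has_leb_density \<mu> r \<longleftrightarrow> r \<in> borel_measurable lborel \<and> (\<forall>x. 0 \<le> r x) \<and>
                           \<mu> = density lborel (\<lambda>x. ennreal (r x))"

text \<open>The integral is taken in the extended reals as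
  (positive part) - (negative part); with Isabelle's ereal convention
  infinity - infinity = infinity.\<close>
definition entropy_leb :: "'a::euclidean_space measure \<Rightarrow> ereal" where
  "entropy_leb \<mu> =
     (if \<exists>r. has_leb_density \<mu> r then
        (let r = (SOME r. has_leb_density \<mu> r) in
           (enn2ereal (\<integral>\<^sup>+x. ennreal (max 0 (r x * ln (r x))) \<partial>lborel)
            - enn2ereal (\<integral>\<^sup>+x. ennreal (max 0 (- (r x * ln (r x)))) \<partial>lborel)))
      else \<infinity>)"

definition quad_cost :: "('a::euclidean_space \<times> 'a) measure \<Rightarrow> ereal" where
  "quad_cost \<pi> = enn2ereal (\<integral>\<^sup>+z. ennreal ((norm (fst z - snd z))\<^sup>2) \<partial>\<pi>)"

definition entropic_W2 :: "real \<Rightarrow> 'a::euclidean_space measure \<Rightarrow> 'a measure \<Rightarrow> ereal" where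
  "entropic_W2 \<epsilon> P Q = (INF \<pi>\<in>couplings P Q. quad_cost \<pi> + ereal \<epsilon> * entropy_leb \<pi>)"

definition gaussian_iso :: "real \<Rightarrow> (real ^ 'd) measure" where
  "gaussian_iso \<epsilon> = density lborel
     (\<lambda>x. ennreal (\<Prod>i\<in>UNIV. normal_density 0 (sqrt (\<epsilon> / 2)) (x $ i)))"

end

theory Submission
  imports Defs
begin

text \<open>Let g be the density of N(0, eps/2 I), so that ln g(y - x) = - ||x - y||^2 / eps - C, and let
  pi* be the coupling of P with density rP(x) g(y - x); its second marginal is P * N(0, eps/2 I).
  For any coupling pi of P and Q with density r, substituting this expression for ||x - y||^2 gives
    cost(pi) + eps H(pi) = eps (H(P) - C) + eps KL(pi || pi*),
  so pi* attains the value eps (H(P) - C), which is therefore the minimum over all Q.  Integrating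
  the Hellinger-type bound |a - b| <= KL-integrand(a, b) / (2t) + t (a + b) over the event
  {y \<in> A} and optimising in t gives (Q A - Q* A)^2 <= 4 KL(pi || pi*), so a minimising Q agrees
  with P * N(0, eps/2 I) on every Borel set.\<close>

definition rel_entropy_integrand :: "real \<Rightarrow> real \<Rightarrow> real" where
  "rel_entropy_integrand a b = a * ln a - a * ln b - a + b"

lemma sqrt_diff_sq_le_rel_entropy_integrand:
  fixes a b :: real
  assumes "0 < a" "0 < b"
  shows "(sqrt a - sqrt b)\<^sup>2 \<le> rel_entropy_integrand a b"
proof -
  define u v where "u = sqrt a" "v = sqrt b"
  have u: "u > 0" "a = u\<^sup>2" and v: "v > 0" "b = v\<^sup>2"
    using assms by (auto simp: u_v_def)
  have "ln (v / u) \<le> v / u - 1"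
    using u v by (intro ln_le_minus_one) simp
  then have "u\<^sup>2 * (ln v - ln u) \<le> u\<^sup>2 * (v / u - 1)"
    using u v by (intro mult_left_mono) (auto simp: ln_div)
  also have "\<dots> = u * v - u\<^sup>2"
    using u by (simp add: power2_eq_square field_simps)
  finally have *: "u\<^sup>2 * (ln v - ln u) \<le> u * v - u\<^sup>2" .
  have "rel_entropy_integrand a b = 2 * (u\<^sup>2 * (ln u - ln v)) - u\<^sup>2 + v\<^sup>2"
    using u v by (simp add: rel_entropy_integrand_def ln_realpow algebra_simps)
  with * show ?thesis
    by (simp add: u_v_def[symmetric] power2_eq_square algebra_simps)
qed

lemma rel_entropy_integrand_nonneg:
  fixes a b :: real
  assumes "0 \<le> a" "0 \<le> b" "b = 0 \<Longrightarrow> a = 0"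
  shows "0 \<le> rel_entropy_integrand a b"
proof (cases "a = 0")
  case True
  then show ?thesis using assms by (simp add: rel_entropy_integrand_def)
next
  case False
  then have "0 < a" "0 < b" using assms by force+
  then show ?thesis
    using sqrt_diff_sq_le_rel_entropy_integrand by (meson order_trans zero_le_power2)
qed

lemma abs_diff_le_rel_entropy_integrand:
  fixes a b t :: real
  assumes "0 \<le> a" "0 \<le> b" "b = 0 \<Longrightarrow> a = 0" "0 < t"
  shows "\<bar>a - b\<bar> \<le> rel_entropy_integrand a b / (2 * t) + t * (a + b)"
proof (cases "a = 0")
  case True
  have "0 < 2 * (t - 1 / 2)\<^sup>2 + 1 / 2" by (simp add: add_nonneg_pos)
  then have "1 \<le> 1 / (2 * t) + t"
    using \<open>0 < t\<close> by (simp add: field_simps power2_eq_square)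
  then have "b * 1 \<le> b * (1 / (2 * t) + t)"
    using \<open>0 \<le> b\<close> by (intro mult_left_mono)
  then show ?thesis
    using True \<open>0 \<le> b\<close> by (simp add: rel_entropy_integrand_def algebra_simps)
next
  case False
  then have a: "0 < a" and b: "0 < b" using assms by force+
  define u v where "u = sqrt a" "v = sqrt b"
  have u: "u > 0" "a = u\<^sup>2" and v: "v > 0" "b = v\<^sup>2"
    using a b by (auto simp: u_v_def)
  have "a - b = (u - v) * (u + v)"
    using u v by (simp add: power2_eq_square algebra_simps)
  then have "\<bar>a - b\<bar> = \<bar>u - v\<bar> * (u + v)"
    using u v by (simp add: abs_mult)
  also have "\<dots> \<le> (u - v)\<^sup>2 / (2 * t) + t * (u + v)\<^sup>2 / 2"
  proof -
    have "0 \<le> (\<bar>u - v\<bar> - t * (u + v))\<^sup>2" by simp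
    then have "2 * t * (\<bar>u - v\<bar> * (u + v)) \<le> (u - v)\<^sup>2 + t\<^sup>2 * (u + v)\<^sup>2"
      by (simp add: power2_eq_square algebra_simps abs_mult_self_eq)
    then show ?thesis
      using \<open>0 < t\<close> by (simp add: field_simps power2_eq_square)
  qed
  also have "\<dots> \<le> rel_entropy_integrand a b / (2 * t) + t * (a + b)"
  proof (intro add_mono divide_right_mono)
    show "(u - v)\<^sup>2 \<le> rel_entropy_integrand a b"
      using sqrt_diff_sq_le_rel_entropy_integrand[OF a b] by (simp add: u_v_def)
    have "0 \<le> (u - v)\<^sup>2" by simp
    then have "(u + v)\<^sup>2 / 2 \<le> a + b"
      using u v by (simp add: power2_eq_square algebra_simps)
    then show "t * (u + v)\<^sup>2 / 2 \<le> t * (a + b)"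
      using \<open>0 < t\<close> by (simp add: mult_left_mono)
  qed (use \<open>0 < t\<close> in simp)
  finally show ?thesis .
qed

lemma square_le_of_abs_le_for_all_pos:
  fixes d I :: real
  assumes "\<And>t. 0 < t \<Longrightarrow> \<bar>d\<bar> \<le> I / (2 * t) + 2 * t" "0 \<le> I"
  shows "d\<^sup>2 \<le> 4 * I"
proof (cases "d = 0")
  case True
  then show ?thesis using assms(2) by simp
next
  case False
  then have "\<bar>d\<bar> \<le> 2 * I / \<bar>d\<bar> + \<bar>d\<bar> / 2"
    using assms(1)[of "\<bar>d\<bar> / 4"] by simp
  then have "\<bar>d\<bar> * \<bar>d\<bar> \<le> 4 * I"
    using False by (simp add: field_simps)
  then show ?thesis by (simp add: power2_eq_square)
qed

lemma measurable_fst_borel_prod[measurable]: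
  "fst \<in> (borel :: ('a::euclidean_space \<times> 'b::euclidean_space) measure) \<rightarrow>\<^sub>M borel"
  by (subst borel_prod[symmetric]) simp

lemma measurable_snd_borel_prod[measurable]:
  "snd \<in> (borel :: ('a::euclidean_space \<times> 'b::euclidean_space) measure) \<rightarrow>\<^sub>M borel"
  by (subst borel_prod[symmetric]) simp

definition sq_dist :: "'a::real_normed_vector \<times> 'a \<Rightarrow> real" where
  "sq_dist z = (norm (fst z - snd z))\<^sup>2"

lemma sq_dist_measurable[measurable]:
  "(sq_dist :: 'a::euclidean_space \<times> 'a \<Rightarrow> real) \<in> borel_measurable borel"
  unfolding sq_dist_def by measurable

lemma sq_dist_nonneg: "0 \<le> sq_dist z"
  by (simp add: sq_dist_def)

lemma coupling_densityD:
  assumes "\<pi> \<in> couplings P Q" "has_leb_density \<pi> r"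
  shows "\<pi> = density lborel (\<lambda>z. ennreal (r z))" "r \<in> borel_measurable borel" "0 \<le> r z"
    "prob_space (density lborel (\<lambda>z. ennreal (r z)))"
    "distr (density lborel (\<lambda>z. ennreal (r z))) borel fst = P"
    "distr (density lborel (\<lambda>z. ennreal (r z))) borel snd = Q"
  using assms unfolding couplings_def has_leb_density_def
  by (auto simp: measurable_lborel1 simp del: split_paired_All)

lemma has_bochner_integral_prob_density:
  fixes r :: "'a::euclidean_space \<Rightarrow> real"
  assumes "r \<in> borel_measurable borel" "\<And>z. 0 \<le> r z"
    and "prob_space (density lborel (\<lambda>z. ennreal (r z)))"
  shows "has_bochner_integral lborel r 1"
proof (rule has_bochner_integral_nn_integral)
  show "(\<integral>\<^sup>+z. ennreal (r z) \<partial>lborel) = ennreal 1"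
    using prob_space.emeasure_space_1[OF assms(3)] assms(1) by (simp add: emeasure_density)
qed (use assms in auto)

lemma nn_integral_density_distr:
  fixes r :: "'b::euclidean_space \<Rightarrow> real" and proj :: "'b \<Rightarrow> 'a::euclidean_space"
  assumes [measurable]: "r \<in> borel_measurable borel" "proj \<in> borel \<rightarrow>\<^sub>M borel"
    "h \<in> borel_measurable borel"
    and "distr (density lborel (\<lambda>z. ennreal (r z))) borel proj = R"
  shows "(\<integral>\<^sup>+z. ennreal (r z) * h (proj z) \<partial>lborel) = integral\<^sup>N R h"
  using assms(4)[symmetric] by (simp add: nn_integral_density nn_integral_distr)

lemma has_bochner_integral_density_distr:
  fixes r :: "'b::euclidean_space \<Rightarrow> real" and proj :: "'b \<Rightarrow> 'a::euclidean_space"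
    and f :: "'a \<Rightarrow> real"
  assumes [measurable]: "r \<in> borel_measurable borel" "proj \<in> borel \<rightarrow>\<^sub>M borel"
    "f \<in> borel_measurable borel"
    and r_nonneg: "\<And>z. 0 \<le> r z"
    and R: "distr (density lborel (\<lambda>z. ennreal (r z))) borel proj = R"
    and "integrable R f"
  shows "has_bochner_integral lborel (\<lambda>z. r z * f (proj z)) (integral\<^sup>L R f)"
proof -
  have "integrable (density lborel (\<lambda>z. ennreal (r z))) (\<lambda>z. f (proj z))"
    using \<open>integrable R f\<close> unfolding R[symmetric] by (subst (asm) integrable_distr_eq) auto
  then have "integrable lborel (\<lambda>z. r z * f (proj z))"
    using r_nonneg by (subst (asm) integrable_density) auto
  moreover have "integral\<^sup>L R f = integral\<^sup>L lborel (\<lambda>z. r z * f (proj z))"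
    unfolding R[symmetric] using r_nonneg by (simp add: integral_distr integral_density)
  ultimately show ?thesis
    by (simp add: has_bochner_integral_integrable)
qed

lemma has_bochner_integral_density_indicator:
  fixes r :: "'b::euclidean_space \<Rightarrow> real" and proj :: "'b \<Rightarrow> 'a::euclidean_space"
  assumes [measurable]: "r \<in> borel_measurable borel" "proj \<in> borel \<rightarrow>\<^sub>M borel" "A \<in> sets borel"
    and "\<And>z. 0 \<le> r z" "prob_space (density lborel (\<lambda>z. ennreal (r z)))"
    and R: "distr (density lborel (\<lambda>z. ennreal (r z))) borel proj = R"
  shows "has_bochner_integral lborel (\<lambda>z. r z * indicator A (proj z)) (measure R A)"
proof -
  interpret R: prob_space R
    unfolding R[symmetric] by (rule prob_space.prob_space_distr[OF assms(5)]) simp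
  have sets_R: "sets R = sets borel"
    unfolding R[symmetric] by simp
  have "integrable R (indicator A :: 'a \<Rightarrow> real)"
    using sets_R by (intro integrable_real_indicator) (auto simp: less_top[symmetric])
  from has_bochner_integral_density_distr[OF _ _ _ assms(4) R this]
  show ?thesis
    using sets_R by (simp add: R.emeasure_eq_measure)
qed

lemma quad_cost_density:
  assumes "has_leb_density \<pi> r"
  shows "quad_cost \<pi> = enn2ereal (\<integral>\<^sup>+z. ennreal (r z * sq_dist z) \<partial>lborel)"
proof -
  have [measurable]: "r \<in> borel_measurable borel" and "\<And>z. 0 \<le> r z"
    and "\<pi> = density lborel (\<lambda>z. ennreal (r z))"
    using assms unfolding has_leb_density_def by (auto simp: measurable_lborel1)
  then show ?thesis
    unfolding quad_cost_def sq_dist_def[symmetric]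
    by (simp add: nn_integral_density ennreal_mult sq_dist_nonneg)
qed

lemma entropy_leb_eq:
  assumes "has_leb_density \<mu> r"
  shows "entropy_leb \<mu> = enn2ereal (\<integral>\<^sup>+z. ennreal (max 0 (r z * ln (r z))) \<partial>lborel)
        - enn2ereal (\<integral>\<^sup>+z. ennreal (max 0 (- (r z * ln (r z)))) \<partial>lborel)"
proof -
  define r' where "r' = (SOME r. has_leb_density \<mu> r)"
  have r': "has_leb_density \<mu> r'"
    unfolding r'_def using assms by (rule someI[where P = "has_leb_density \<mu>"])
  have "AE x in lborel. ennreal (r x) = ennreal (r' x)"
    using assms r' unfolding has_leb_density_def
    by (intro sigma_finite_measure.density_unique[OF sigma_finite_lborel]) auto
  moreover have "\<And>x. 0 \<le> r x" "\<And>x. 0 \<le> r' x"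
    using assms r' by (auto simp: has_leb_density_def)
  ultimately have "AE x in lborel. r' x = r x"
    by (auto elim: AE_mp)
  then have cong: "(\<integral>\<^sup>+z. F (r' z) \<partial>lborel) = (\<integral>\<^sup>+z. F (r z) \<partial>lborel)" for F :: "real \<Rightarrow> ennreal"
    by (intro nn_integral_cong_AE) (auto elim: eventually_mono)
  have "entropy_leb \<mu> = enn2ereal (\<integral>\<^sup>+z. ennreal (max 0 (r' z * ln (r' z))) \<partial>lborel)
        - enn2ereal (\<integral>\<^sup>+z. ennreal (max 0 (- (r' z * ln (r' z)))) \<partial>lborel)"
    using assms unfolding entropy_leb_def r'_def by (auto simp: Let_def)
  also have "\<dots> = enn2ereal (\<integral>\<^sup>+z. ennreal (max 0 (r z * ln (r z))) \<partial>lborel)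
        - enn2ereal (\<integral>\<^sup>+z. ennreal (max 0 (- (r z * ln (r z)))) \<partial>lborel)"
    unfolding cong[of "\<lambda>x. ennreal (max 0 (x * ln x))"] cong[of "\<lambda>x. ennreal (max 0 (- (x * ln x)))"] ..
  finally show ?thesis .
qed

lemma integrable_of_finite_nn_integral_parts:
  fixes f :: "'a \<Rightarrow> real"
  assumes [measurable]: "f \<in> borel_measurable M"
    and "(\<integral>\<^sup>+x. ennreal (max 0 (f x)) \<partial>M) < \<infinity>" "(\<integral>\<^sup>+x. ennreal (max 0 (- f x)) \<partial>M) < \<infinity>"
  shows "integrable M f"
proof -
  have "ennreal \<bar>f x\<bar> = ennreal (max 0 (f x)) + ennreal (max 0 (- f x))" for x
    by (cases "0 \<le> f x") (simp_all add: ennreal_neg)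
  then have "(\<integral>\<^sup>+x. ennreal (norm (f x)) \<partial>M)
      = (\<integral>\<^sup>+x. ennreal (max 0 (f x)) \<partial>M) + (\<integral>\<^sup>+x. ennreal (max 0 (- f x)) \<partial>M)"
    by (simp add: nn_integral_add)
  then show ?thesis
    using assms by (simp add: integrable_iff_bounded)
qed

lemma enn2ereal_nn_integral_parts_eq_integral:
  fixes f :: "'a \<Rightarrow> real"
  assumes [measurable]: "f \<in> borel_measurable M"
    and pos: "(\<integral>\<^sup>+x. ennreal (max 0 (f x)) \<partial>M) < \<infinity>"
    and neg: "(\<integral>\<^sup>+x. ennreal (max 0 (- f x)) \<partial>M) < \<infinity>"
  shows "enn2ereal (\<integral>\<^sup>+x. ennreal (max 0 (f x)) \<partial>M)
      - enn2ereal (\<integral>\<^sup>+x. ennreal (max 0 (- f x)) \<partial>M) = ereal (integral\<^sup>L M f)"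
proof -
  have "integral\<^sup>L M f = enn2real (\<integral>\<^sup>+x. ennreal (f x) \<partial>M) - enn2real (\<integral>\<^sup>+x. ennreal (- f x) \<partial>M)"
    by (rule real_lebesgue_integral_def[OF integrable_of_finite_nn_integral_parts[OF assms]])
  moreover have "enn2ereal X = ereal (enn2real X)" if "X < \<infinity>" for X :: ennreal
    using that by (cases X rule: ennreal_cases) auto
  ultimately show ?thesis
    using pos neg by (simp add: ennreal_max_0)
qed

lemma quad_cost_nonneg: "0 \<le> quad_cost \<pi>"
  by (simp add: quad_cost_def)

lemma has_bochner_integral_quad_cost:
  assumes "has_leb_density \<pi> r" "quad_cost \<pi> \<noteq> \<infinity>"
  shows "has_bochner_integral lborel (\<lambda>z. r z * sq_dist z) (real_of_ereal (quad_cost \<pi>))"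
proof (rule has_bochner_integral_nn_integral)
  have [measurable]: "r \<in> borel_measurable borel" and r_nonneg: "\<And>z. 0 \<le> r z"
    using assms(1) unfolding has_leb_density_def by (auto simp: measurable_lborel1)
  then show "(\<lambda>z. r z * sq_dist z) \<in> borel_measurable lborel" "AE z in lborel. 0 \<le> r z * sq_dist z"
    by (auto simp: sq_dist_nonneg)
  show "0 \<le> real_of_ereal (quad_cost \<pi>)"
    by (simp add: quad_cost_nonneg real_of_ereal_pos)
  have "(\<integral>\<^sup>+z. ennreal (r z * sq_dist z) \<partial>lborel) \<noteq> \<top>"
    using assms by (simp add: quad_cost_density)
  then show "(\<integral>\<^sup>+z. ennreal (r z * sq_dist z) \<partial>lborel) = ennreal (real_of_ereal (quad_cost \<pi>))"
    using assms(1) by (simp add: quad_cost_density enn2ereal_eq_top_iff less_top)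
qed

locale entropic_ot_setting =
  fixes \<epsilon> :: real and P :: "'a::euclidean_space measure" and rP :: "'a \<Rightarrow> real"
    and g :: "'a \<Rightarrow> real" and C :: real
  assumes eps_pos: "0 < \<epsilon>"
    and prob_space_P: "prob_space P"
    and density_P: "has_leb_density P rP"
    and integrable_ln_rP: "integrable P (\<lambda>x. ln (rP x))"
    and g_measurable[measurable]: "g \<in> borel_measurable borel"
    and g_pos: "\<And>z. 0 < g z"
    and nn_integral_g: "(\<integral>\<^sup>+z. ennreal (g z) \<partial>lborel) = 1"
    and nn_integral_g_norm_sq: "(\<integral>\<^sup>+z. ennreal (g z * (norm z)\<^sup>2) \<partial>lborel) < \<infinity>"
    and ln_g: "\<And>z. ln (g z) = - (norm z)\<^sup>2 / \<epsilon> - C"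
begin

lemma rP_measurable[measurable]: "rP \<in> borel_measurable borel"
  using density_P unfolding has_leb_density_def by (simp add: measurable_lborel1)

lemma rP_nonneg: "0 \<le> rP x"
  using density_P unfolding has_leb_density_def by simp

lemma P_eq_density: "P = density lborel (\<lambda>x. ennreal (rP x))"
  using density_P unfolding has_leb_density_def by simp

lemma nn_integral_rP: "(\<integral>\<^sup>+x. ennreal (rP x) \<partial>lborel) = 1"
  using prob_space.emeasure_space_1[OF prob_space_P] by (simp add: P_eq_density emeasure_density)

definition opt_density :: "'a \<times> 'a \<Rightarrow> real" where
  "opt_density z = rP (fst z) * g (snd z - fst z)"

definition opt_coupling :: "('a \<times> 'a) measure" where
  "opt_coupling = density lborel (\<lambda>z. ennreal (opt_density z))"

definition opt_marginal :: "'a measure" where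
  "opt_marginal = distr opt_coupling borel snd"

definition opt_value :: real where
  "opt_value = \<epsilon> * integral\<^sup>L P (\<lambda>x. ln (rP x)) - \<epsilon> * C"

lemma opt_density_measurable[measurable]: "opt_density \<in> borel_measurable borel"
  unfolding opt_density_def by measurable

lemma opt_density_nonneg: "0 \<le> opt_density z"
  unfolding opt_density_def using rP_nonneg g_pos by (simp add: less_imp_le)

lemma opt_density_eq_0_iff: "opt_density z = 0 \<longleftrightarrow> rP (fst z) = 0"
  unfolding opt_density_def using g_pos[of "snd z - fst z"] by simp

lemma ln_opt_density:
  assumes "0 < rP (fst z)"
  shows "ln (opt_density z) = ln (rP (fst z)) - sq_dist z / \<epsilon> - C"
  using assms by (simp add: opt_density_def ln_mult_pos[OF assms g_pos] ln_g sq_dist_def norm_minus_commute)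

lemma nn_integral_opt_density:
  assumes [measurable]: "h \<in> borel_measurable borel"
  shows "(\<integral>\<^sup>+z. ennreal (opt_density z) * h z \<partial>lborel)
    = (\<integral>\<^sup>+x. ennreal (rP x) * (\<integral>\<^sup>+y. ennreal (g y) * h (x, x + y) \<partial>lborel) \<partial>lborel)"
proof -
  have "(\<integral>\<^sup>+z. ennreal (opt_density z) * h z \<partial>lborel)
      = (\<integral>\<^sup>+x. \<integral>\<^sup>+y. ennreal (opt_density (x, y)) * h (x, y) \<partial>lborel \<partial>lborel)"
    unfolding lborel_prod[symmetric]
    by (rule sigma_finite_measure.nn_integral_fst[symmetric, OF sigma_finite_lborel])
      (simp add: lborel_prod)
  also have "\<dots> = (\<integral>\<^sup>+x. ennreal (rP x) * (\<integral>\<^sup>+y. ennreal (g y) * h (x, x + y) \<partial>lborel) \<partial>lborel)"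
  proof (rule nn_integral_cong)
    fix x :: 'a
    have "(\<integral>\<^sup>+y. ennreal (opt_density (x, y)) * h (x, y) \<partial>lborel)
        = ennreal (rP x) * (\<integral>\<^sup>+y. ennreal (g (y - x)) * h (x, y) \<partial>lborel)"
      by (subst nn_integral_cmult[symmetric])
        (auto intro!: nn_integral_cong simp: opt_density_def ennreal_mult rP_nonneg g_pos less_imp_le
          mult.assoc)
    also have "(\<integral>\<^sup>+y. ennreal (g (y - x)) * h (x, y) \<partial>lborel)
        = (\<integral>\<^sup>+y. ennreal (g (y - x)) * h (x, y) \<partial>distr lborel borel ((+) x))"
      by (simp add: lborel_distr_plus)
    also have "\<dots> = (\<integral>\<^sup>+y. ennreal (g y) * h (x, x + y) \<partial>lborel)"
      by (subst nn_integral_distr) auto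
    finally show "(\<integral>\<^sup>+y. ennreal (opt_density (x, y)) * h (x, y) \<partial>lborel)
       = ennreal (rP x) * (\<integral>\<^sup>+y. ennreal (g y) * h (x, x + y) \<partial>lborel)" .
  qed
  finally show ?thesis .
qed

lemma prob_space_opt_coupling: "prob_space opt_coupling"
proof (rule prob_spaceI)
  have "emeasure opt_coupling (space opt_coupling) = (\<integral>\<^sup>+z. ennreal (opt_density z) * 1 \<partial>lborel)"
    unfolding opt_coupling_def by (simp add: emeasure_density)
  also have "\<dots> = 1"
    using nn_integral_opt_density[of "\<lambda>_. 1"] by (simp add: nn_integral_g nn_integral_rP)
  finally show "emeasure opt_coupling (space opt_coupling) = 1" .
qed

lemma emeasure_distr_opt_coupling:
  assumes "f \<in> borel \<rightarrow>\<^sub>M borel" "A \<in> sets borel"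
  shows "emeasure (distr opt_coupling borel f) A
    = (\<integral>\<^sup>+z. ennreal (opt_density z) * indicator A (f z) \<partial>lborel)"
proof -
  have "f -` A \<in> sets borel"
    using measurable_sets[OF assms] by simp
  then show ?thesis
    using assms unfolding opt_coupling_def
    by (subst emeasure_distr) (simp_all add: emeasure_density indicator_vimage)
qed

lemma distr_fst_opt_coupling: "distr opt_coupling borel fst = P"
proof (rule measure_eqI)
  show "sets (distr opt_coupling borel fst) = sets P"
    by (simp add: P_eq_density)
  fix A assume "A \<in> sets (distr opt_coupling borel fst)"
  then have [measurable]: "A \<in> sets borel" by simp
  have "emeasure (distr opt_coupling borel fst) A = (\<integral>\<^sup>+x. ennreal (rP x) * indicator A x \<partial>lborel)"
    using nn_integral_opt_density[of "\<lambda>z. indicator A (fst z)"]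
    by (simp add: emeasure_distr_opt_coupling nn_integral_multc nn_integral_g)
  also have "\<dots> = emeasure P A"
    unfolding P_eq_density by (simp add: emeasure_density)
  finally show "emeasure (distr opt_coupling borel fst) A = emeasure P A" .
qed

lemma opt_coupling_in_couplings: "opt_coupling \<in> couplings P opt_marginal"
  unfolding couplings_def opt_marginal_def
  using prob_space_opt_coupling distr_fst_opt_coupling by (simp add: opt_coupling_def)

lemma is_prob_opt_marginal: "is_prob opt_marginal"
  unfolding is_prob_def opt_marginal_def
  using prob_space_opt_coupling
  by (auto intro!: prob_space.prob_space_distr simp: opt_coupling_def)

lemma has_leb_density_opt_coupling: "has_leb_density opt_coupling opt_density"
  unfolding has_leb_density_def opt_coupling_def using opt_density_nonneg by simp

lemma has_bochner_integral_opt_density: "has_bochner_integral lborel opt_density 1"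
  using prob_space_opt_coupling
  by (intro has_bochner_integral_prob_density) (auto simp: opt_coupling_def opt_density_nonneg)

lemma AE_coupling_density_vanishes:
  assumes "\<pi> \<in> couplings P Q" "has_leb_density \<pi> r"
  shows "AE z in lborel. opt_density z = 0 \<longrightarrow> r z = 0"
proof -
  note r = coupling_densityD[OF assms]
  have [measurable]: "r \<in> borel_measurable borel" by (rule r(2))
  let ?N = "indicator {x. rP x = 0} :: 'a \<Rightarrow> ennreal"
  have "(\<integral>\<^sup>+z. ennreal (r z) * ?N (fst z) \<partial>lborel) = integral\<^sup>N P ?N"
    by (rule nn_integral_density_distr[OF _ _ _ r(5)]) auto
  also have "\<dots> = (\<integral>\<^sup>+x. ennreal (rP x) * ?N x \<partial>lborel)"
    unfolding P_eq_density by (subst nn_integral_density) auto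
  also have "\<dots> = 0"
    by (subst nn_integral_0_iff_AE) (auto simp: indicator_def intro!: AE_I2)
  finally have "AE z in lborel. ennreal (r z) * ?N (fst z) = 0"
    by (subst (asm) nn_integral_0_iff_AE) auto
  then show ?thesis
  proof eventually_elim
    case (elim z)
    then show ?case
      using r(3)[of z] by (auto simp: opt_density_eq_0_iff indicator_def ennreal_eq_0_iff)
  qed
qed

definition affine_part :: "('a \<times> 'a \<Rightarrow> real) \<Rightarrow> 'a \<times> 'a \<Rightarrow> real" where
  "affine_part r z = r z * sq_dist z / \<epsilon> - r z * ln (rP (fst z)) + r z * C - r z + opt_density z"

lemma AE_rel_entropy_integrand_eq:
  assumes "\<pi> \<in> couplings P Q" "has_leb_density \<pi> r"
  shows "AE z in lborel.
    rel_entropy_integrand (r z) (opt_density z) = r z * ln (r z) + affine_part r z"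
  using AE_coupling_density_vanishes[OF assms]
proof eventually_elim
  case (elim z)
  show ?case
  proof (cases "rP (fst z) = 0")
    case True
    then show ?thesis
      using elim by (simp add: opt_density_eq_0_iff rel_entropy_integrand_def affine_part_def)
  next
    case False
    then have "0 < rP (fst z)" using rP_nonneg[of "fst z"] by simp
    then show ?thesis
      by (simp add: rel_entropy_integrand_def affine_part_def ln_opt_density algebra_simps)
  qed
qed

lemma AE_rel_entropy_integrand_nonneg:
  assumes "\<pi> \<in> couplings P Q" "has_leb_density \<pi> r"
  shows "AE z in lborel. 0 \<le> rel_entropy_integrand (r z) (opt_density z)"
  using AE_coupling_density_vanishes[OF assms]
  by eventually_elim
    (use coupling_densityD(3)[OF assms] opt_density_nonneg in \<open>auto intro: rel_entropy_integrand_nonneg\<close>)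

lemma has_bochner_integral_affine_part:
  assumes "\<pi> \<in> couplings P Q" "has_leb_density \<pi> r" "quad_cost \<pi> \<noteq> \<infinity>"
  shows "has_bochner_integral lborel (affine_part r)
    (real_of_ereal (quad_cost \<pi>) / \<epsilon> - integral\<^sup>L P (\<lambda>x. ln (rP x)) + C)"
proof -
  note r = coupling_densityD[OF assms(1,2)]
  have [measurable]: "r \<in> borel_measurable borel" by (rule r(2))
  have "has_bochner_integral lborel (\<lambda>z. r z * ln (rP (fst z))) (integral\<^sup>L P (\<lambda>x. ln (rP x)))"
    by (rule has_bochner_integral_density_distr[OF _ _ _ r(3) r(5) integrable_ln_rP]) auto
  moreover have "has_bochner_integral lborel r 1"
    using r by (intro has_bochner_integral_prob_density) auto
  ultimately have "has_bochner_integral lborel (affine_part r)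
    (real_of_ereal (quad_cost \<pi>) / \<epsilon> - integral\<^sup>L P (\<lambda>x. ln (rP x)) + 1 * C - 1 + 1)"
    unfolding affine_part_def[abs_def]
    by (intro has_bochner_integral_add has_bochner_integral_diff has_bochner_integral_divide_zero
        has_bochner_integral_mult_left has_bochner_integral_quad_cost assms(2,3)
        has_bochner_integral_opt_density)
  then show ?thesis by simp
qed

lemma coupling_entropy_eq:
  assumes "\<pi> \<in> couplings P Q" "has_leb_density \<pi> r" "quad_cost \<pi> \<noteq> \<infinity>"
    and "(\<integral>\<^sup>+z. ennreal (max 0 (r z * ln (r z))) \<partial>lborel) < \<infinity>"
  shows "integrable lborel (\<lambda>z. r z * ln (r z))"
    and "entropy_leb \<pi> = ereal (\<integral>z. r z * ln (r z) \<partial>lborel)"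
proof -
  have [measurable]: "r \<in> borel_measurable borel" by (rule coupling_densityD(2)[OF assms(1,2)])
  have "AE z in lborel. max 0 (- (r z * ln (r z))) \<le> norm (affine_part r z)"
    using AE_rel_entropy_integrand_eq[OF assms(1,2)] AE_rel_entropy_integrand_nonneg[OF assms(1,2)]
    by eventually_elim auto
  then have "(\<integral>\<^sup>+z. ennreal (max 0 (- (r z * ln (r z)))) \<partial>lborel)
      \<le> (\<integral>\<^sup>+z. ennreal (norm (affine_part r z)) \<partial>lborel)"
    by (intro nn_integral_mono_AE) (auto elim: eventually_mono intro: ennreal_leI)
  also have "\<dots> < \<infinity>"
    using has_bochner_integral_affine_part[OF assms(1-3)]
    by (simp add: has_bochner_integral_iff integrable_iff_bounded)
  finally have neg: "(\<integral>\<^sup>+z. ennreal (max 0 (- (r z * ln (r z)))) \<partial>lborel) < \<infinity>" .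
  show "integrable lborel (\<lambda>z. r z * ln (r z))"
    by (rule integrable_of_finite_nn_integral_parts[OF _ assms(4) neg]) simp
  show "entropy_leb \<pi> = ereal (\<integral>z. r z * ln (r z) \<partial>lborel)"
    unfolding entropy_leb_eq[OF assms(2)]
    by (rule enn2ereal_nn_integral_parts_eq_integral[OF _ assms(4) neg]) simp
qed

lemma coupling_value_eq:
  assumes "\<pi> \<in> couplings P Q" "has_leb_density \<pi> r" "quad_cost \<pi> \<noteq> \<infinity>"
    and "(\<integral>\<^sup>+z. ennreal (max 0 (r z * ln (r z))) \<partial>lborel) < \<infinity>"
  shows "integrable lborel (\<lambda>z. rel_entropy_integrand (r z) (opt_density z))"
    and "quad_cost \<pi> + ereal \<epsilon> * entropy_leb \<pi>
      = ereal (opt_value + \<epsilon> * (\<integral>z. rel_entropy_integrand (r z) (opt_density z) \<partial>lborel))"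
proof -
  have [measurable]: "r \<in> borel_measurable borel" by (rule coupling_densityD(2)[OF assms(1,2)])
  define K where "K = real_of_ereal (quad_cost \<pi>)"
  define E where "E = (\<integral>z. r z * ln (r z) \<partial>lborel)"
  have "has_bochner_integral lborel (\<lambda>z. r z * ln (r z) + affine_part r z)
      (E + (K / \<epsilon> - integral\<^sup>L P (\<lambda>x. ln (rP x)) + C))"
    unfolding E_def K_def
    using coupling_entropy_eq(1)[OF assms] has_bochner_integral_affine_part[OF assms(1-3)]
    by (intro has_bochner_integral_add) (auto simp: has_bochner_integral_integrable)
  then have integral: "has_bochner_integral lborel (\<lambda>z. rel_entropy_integrand (r z) (opt_density z))
      (E + (K / \<epsilon> - integral\<^sup>L P (\<lambda>x. ln (rP x)) + C))"
    using AE_rel_entropy_integrand_eq[OF assms(1,2)]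
    by (subst has_bochner_integral_cong_AE) (auto simp: rel_entropy_integrand_def affine_part_def)
  then show "integrable lborel (\<lambda>z. rel_entropy_integrand (r z) (opt_density z))"
    by (simp add: has_bochner_integral_iff)
  have "quad_cost \<pi> = ereal K"
    unfolding K_def using assms(3) quad_cost_nonneg[of \<pi>] by (simp add: ereal_real')
  moreover have "entropy_leb \<pi> = ereal E"
    unfolding E_def by (rule coupling_entropy_eq(2)[OF assms])
  ultimately show "quad_cost \<pi> + ereal \<epsilon> * entropy_leb \<pi>
      = ereal (opt_value + \<epsilon> * (\<integral>z. rel_entropy_integrand (r z) (opt_density z) \<partial>lborel))"
    using has_bochner_integral_integral_eq[OF integral] eps_pos
    by (simp add: opt_value_def field_simps)
qed

lemma has_bochner_integral_marginal_diff:
  assumes "\<pi> \<in> couplings P Q" "has_leb_density \<pi> r" and [measurable]: "A \<in> sets borel"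
  shows "has_bochner_integral lborel (\<lambda>z. (r z - opt_density z) * indicator A (snd z))
    (measure Q A - measure opt_marginal A)"
proof -
  note r = coupling_densityD[OF assms(1,2)]
  have "has_bochner_integral lborel (\<lambda>z. r z * indicator A (snd z)) (measure Q A)"
    using r by (intro has_bochner_integral_density_indicator) auto
  moreover have "has_bochner_integral lborel (\<lambda>z. opt_density z * indicator A (snd z))
      (measure opt_marginal A)"
    using prob_space_opt_coupling opt_density_nonneg
    by (intro has_bochner_integral_density_indicator) (auto simp: opt_marginal_def opt_coupling_def)
  ultimately show ?thesis
    unfolding left_diff_distrib by (rule has_bochner_integral_diff)
qed

lemma marginal_diff_le:
  assumes "\<pi> \<in> couplings P Q" "has_leb_density \<pi> r"
    and integrable: "integrable lborel (\<lambda>z. rel_entropy_integrand (r z) (opt_density z))"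
    and "A \<in> sets borel" "0 < t"
  shows "\<bar>measure Q A - measure opt_marginal A\<bar>
    \<le> (\<integral>z. rel_entropy_integrand (r z) (opt_density z) \<partial>lborel) / (2 * t) + 2 * t"
proof -
  note r = coupling_densityD[OF assms(1,2)]
  define D where "D z = (r z - opt_density z) * indicator A (snd z)" for z
  define B where "B z = rel_entropy_integrand (r z) (opt_density z) / (2 * t) + t * (r z + opt_density z)"
    for z
  have D: "has_bochner_integral lborel D (measure Q A - measure opt_marginal A)"
    unfolding D_def[abs_def] by (rule has_bochner_integral_marginal_diff[OF assms(1,2,4)])
  have "has_bochner_integral lborel B
      ((\<integral>z. rel_entropy_integrand (r z) (opt_density z) \<partial>lborel) / (2 * t) + t * (1 + 1))"
    unfolding B_def[abs_def] using r integrable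
    by (intro has_bochner_integral_add has_bochner_integral_divide_zero has_bochner_integral_mult_right
        has_bochner_integral_prob_density has_bochner_integral_opt_density)
      (auto simp: has_bochner_integral_integrable)
  then have B: "has_bochner_integral lborel B
      ((\<integral>z. rel_entropy_integrand (r z) (opt_density z) \<partial>lborel) / (2 * t) + 2 * t)"
    by (simp add: mult.commute)
  have "AE z in lborel. \<bar>D z\<bar> \<le> B z"
    using AE_coupling_density_vanishes[OF assms(1,2)]
  proof eventually_elim
    case (elim z)
    have "\<bar>D z\<bar> \<le> \<bar>r z - opt_density z\<bar>"
      by (simp add: D_def indicator_def)
    also have "\<dots> \<le> B z"
      unfolding B_def using elim r(3)[of z] opt_density_nonneg[of z] \<open>0 < t\<close>
      by (intro abs_diff_le_rel_entropy_integrand) auto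
    finally show ?case .
  qed
  then have "(\<integral>z. \<bar>D z\<bar> \<partial>lborel) \<le> integral\<^sup>L lborel B"
    using D B by (intro integral_mono_AE) (auto simp: has_bochner_integral_iff)
  then show ?thesis
    using integral_abs_bound[of lborel D] has_bochner_integral_integral_eq[OF D]
      has_bochner_integral_integral_eq[OF B]
    by simp
qed

lemma coupling_value_finiteD:
  assumes "quad_cost \<pi> + ereal \<epsilon> * entropy_leb \<pi> \<noteq> \<infinity>"
  obtains r where "has_leb_density \<pi> r" "quad_cost \<pi> \<noteq> \<infinity>"
    "(\<integral>\<^sup>+z. ennreal (max 0 (r z * ln (r z))) \<partial>lborel) < \<infinity>"
proof -
  have "entropy_leb \<pi> \<noteq> \<infinity>"
    using assms eps_pos quad_cost_nonneg[of \<pi>] by auto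
  then obtain r where r: "has_leb_density \<pi> r"
    unfolding entropy_leb_def by (auto split: if_splits)
  moreover have "quad_cost \<pi> \<noteq> \<infinity>"
    using assms by auto
  moreover have "(\<integral>\<^sup>+z. ennreal (max 0 (r z * ln (r z))) \<partial>lborel) \<noteq> \<top>"
  proof
    assume "(\<integral>\<^sup>+z. ennreal (max 0 (r z * ln (r z))) \<partial>lborel) = \<top>"
    then have "entropy_leb \<pi> = \<infinity>"
      unfolding entropy_leb_eq[OF r] by simp
    with \<open>entropy_leb \<pi> \<noteq> \<infinity>\<close> show False ..
  qed
  ultimately show ?thesis
    using that by (simp add: less_top)
qed

lemma coupling_value_ge:
  assumes "\<pi> \<in> couplings P Q" "A \<in> sets borel"
  shows "ereal (opt_value + \<epsilon> * (measure Q A - measure opt_marginal A)\<^sup>2 / 4)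
    \<le> quad_cost \<pi> + ereal \<epsilon> * entropy_leb \<pi>"
proof (cases "quad_cost \<pi> + ereal \<epsilon> * entropy_leb \<pi> = \<infinity>")
  case True
  then show ?thesis by (simp only: ereal_less_eq(1))
next
  case False
  then obtain r where r: "has_leb_density \<pi> r" "quad_cost \<pi> \<noteq> \<infinity>"
    "(\<integral>\<^sup>+z. ennreal (max 0 (r z * ln (r z))) \<partial>lborel) < \<infinity>"
    by (rule coupling_value_finiteD)
  define I where "I = (\<integral>z. rel_entropy_integrand (r z) (opt_density z) \<partial>lborel)"
  have "(measure Q A - measure opt_marginal A)\<^sup>2 \<le> 4 * I"
  proof (rule square_le_of_abs_le_for_all_pos)
    show "\<bar>measure Q A - measure opt_marginal A\<bar> \<le> I / (2 * t) + 2 * t" if "0 < t" for t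
      unfolding I_def
      by (rule marginal_diff_le[OF assms(1) r(1) coupling_value_eq(1)[OF assms(1) r] assms(2) that])
    show "0 \<le> I"
      unfolding I_def by (rule integral_nonneg_AE[OF AE_rel_entropy_integrand_nonneg[OF assms(1) r(1)]])
  qed
  then show ?thesis
    unfolding coupling_value_eq(2)[OF assms(1) r] I_def[symmetric] using eps_pos by simp
qed

lemma quad_cost_opt_coupling: "quad_cost opt_coupling \<noteq> \<infinity>"
proof -
  have "quad_cost opt_coupling = enn2ereal (\<integral>\<^sup>+z. ennreal (opt_density z) * ennreal (sq_dist z) \<partial>lborel)"
    by (simp add: quad_cost_density[OF has_leb_density_opt_coupling] ennreal_mult
        opt_density_nonneg sq_dist_nonneg)
  also have "\<dots> = enn2ereal (\<integral>\<^sup>+y. ennreal (g y * (norm y)\<^sup>2) \<partial>lborel)"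
    using nn_integral_opt_density[of "\<lambda>z. ennreal (sq_dist z)"] g_pos
    by (simp add: sq_dist_def ennreal_mult less_imp_le nn_integral_multc nn_integral_rP)
  finally show ?thesis
    using nn_integral_g_norm_sq by (simp add: enn2ereal_eq_top_iff less_top)
qed

lemma nn_integral_pos_part_opt_entropy:
  "(\<integral>\<^sup>+z. ennreal (max 0 (opt_density z * ln (opt_density z))) \<partial>lborel) < \<infinity>"
proof -
  define B where "B z = \<bar>opt_density z * ln (rP (fst z))\<bar> + opt_density z * \<bar>C\<bar>" for z
  have "has_bochner_integral lborel (\<lambda>z. opt_density z * ln (rP (fst z))) (integral\<^sup>L P (\<lambda>x. ln (rP x)))"
    using distr_fst_opt_coupling opt_density_nonneg integrable_ln_rP
    by (intro has_bochner_integral_density_distr) (auto simp: opt_coupling_def)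
  then have "integrable lborel B"
    unfolding B_def[abs_def] using has_bochner_integral_opt_density
    by (intro Bochner_Integration.integrable_add integrable_abs integrable_mult_left)
      (auto simp: has_bochner_integral_iff)
  have "max 0 (opt_density z * ln (opt_density z)) \<le> norm (B z)" for z
  proof (cases "rP (fst z) = 0")
    case False
    then have rP: "0 < rP (fst z)" using rP_nonneg[of "fst z"] by simp
    then have "0 < opt_density z" using g_pos by (simp add: opt_density_def)
    moreover have "ln (opt_density z) \<le> ln (rP (fst z)) - C"
      using ln_opt_density[OF rP] eps_pos sq_dist_nonneg[of z] by simp
    ultimately have "opt_density z * ln (opt_density z) \<le> opt_density z * (ln (rP (fst z)) - C)"
      by (intro mult_left_mono) auto
    also have "\<dots> \<le> B z"
    proof -
      have "- (opt_density z * C) \<le> opt_density z * \<bar>C\<bar>"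
        using mult_left_mono[of "- C" "\<bar>C\<bar>" "opt_density z"] \<open>0 < opt_density z\<close> by simp
      then show ?thesis
        using abs_ge_self[of "opt_density z * ln (rP (fst z))"]
        unfolding B_def right_diff_distrib by linarith
    qed
    finally show ?thesis
      using \<open>0 < opt_density z\<close> by (simp add: B_def)
  qed (simp add: opt_density_def B_def)
  then have "(\<integral>\<^sup>+z. ennreal (max 0 (opt_density z * ln (opt_density z))) \<partial>lborel)
      \<le> (\<integral>\<^sup>+z. ennreal (norm (B z)) \<partial>lborel)"
    by (intro nn_integral_mono ennreal_leI)
  also have "\<dots> < \<infinity>"
    using \<open>integrable lborel B\<close> by (simp add: integrable_iff_bounded)
  finally show ?thesis .
qed

lemma opt_coupling_value: "quad_cost opt_coupling + ereal \<epsilon> * entropy_leb opt_coupling = ereal opt_value"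
  using coupling_value_eq(2)[OF opt_coupling_in_couplings has_leb_density_opt_coupling
      quad_cost_opt_coupling nn_integral_pos_part_opt_entropy]
  by (simp add: rel_entropy_integrand_def)

lemma entropic_W2_opt_marginal_le: "entropic_W2 \<epsilon> P opt_marginal \<le> ereal opt_value"
  unfolding entropic_W2_def opt_coupling_value[symmetric]
  by (rule INF_lower[OF opt_coupling_in_couplings])

lemma entropic_W2_ge:
  assumes "A \<in> sets borel"
  shows "ereal (opt_value + \<epsilon> * (measure Q A - measure opt_marginal A)\<^sup>2 / 4) \<le> entropic_W2 \<epsilon> P Q"
  unfolding entropic_W2_def using assms by (intro INF_greatest coupling_value_ge)

lemma opt_marginal_unique_minimizer:
  "is_prob opt_marginal
     \<and> (\<forall>Q. is_prob Q \<longrightarrow> entropic_W2 \<epsilon> P opt_marginal \<le> entropic_W2 \<epsilon> P Q)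
     \<and> (\<forall>Q. is_prob Q \<and> entropic_W2 \<epsilon> P Q \<le> entropic_W2 \<epsilon> P opt_marginal \<longrightarrow> Q = opt_marginal)"
proof (intro conjI allI impI)
  show "is_prob opt_marginal" by (rule is_prob_opt_marginal)
next
  fix Q :: "'a measure"
  show "entropic_W2 \<epsilon> P opt_marginal \<le> entropic_W2 \<epsilon> P Q"
    using entropic_W2_opt_marginal_le entropic_W2_ge[of "{}" Q] by simp
next
  fix Q :: "'a measure"
  assume Q: "is_prob Q \<and> entropic_W2 \<epsilon> P Q \<le> entropic_W2 \<epsilon> P opt_marginal"
  interpret Q: prob_space Q using Q by (simp add: is_prob_def)
  interpret Q': prob_space opt_marginal using is_prob_opt_marginal by (simp add: is_prob_def)
  have "measure Q A = measure opt_marginal A" if "A \<in> sets borel" for A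
  proof -
    have "ereal (opt_value + \<epsilon> * (measure Q A - measure opt_marginal A)\<^sup>2 / 4) \<le> ereal opt_value"
      using entropic_W2_ge[OF that, of Q] conjunct2[OF Q] entropic_W2_opt_marginal_le by order
    then show ?thesis
      using eps_pos by (simp add: mult_le_0_iff)
  qed
  then show "Q = opt_marginal"
    using Q is_prob_opt_marginal
    by (intro measure_eqI) (auto simp: is_prob_def Q.emeasure_eq_measure Q'.emeasure_eq_measure)
qed

end

lemma opt_marginal_eq_convolution:
  fixes P :: "'a::ordered_euclidean_space measure"
  assumes "entropic_ot_setting \<epsilon> P rP g C"
  shows "entropic_ot_setting.opt_marginal rP g = convolution P (density lborel (\<lambda>x. ennreal (g x)))"
proof -
  interpret entropic_ot_setting \<epsilon> P rP g C by (rule assms)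
  define G where "G = density lborel (\<lambda>x. ennreal (g x))"
  have "prob_space G"
    using nn_integral_g by (intro prob_spaceI) (simp add: G_def emeasure_density)
  show ?thesis
    unfolding G_def[symmetric]
  proof (rule measure_eqI)
    show "sets opt_marginal = sets (convolution P G)"
      by (simp add: opt_marginal_def)
    fix A assume "A \<in> sets opt_marginal"
    then have [measurable]: "A \<in> sets borel" by (simp add: opt_marginal_def)
    have "emeasure opt_marginal A
        = (\<integral>\<^sup>+x. ennreal (rP x) * (\<integral>\<^sup>+y. ennreal (g y) * indicator A (x + y) \<partial>lborel) \<partial>lborel)"
      using nn_integral_opt_density[of "\<lambda>z. indicator A (snd z)"]
      by (simp add: opt_marginal_def emeasure_distr_opt_coupling)
    also have "\<dots> = (\<integral>\<^sup>+x. \<integral>\<^sup>+y. indicator A (x + y) \<partial>G \<partial>P)"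
      unfolding G_def P_eq_density by (simp add: nn_integral_density)
    also have "\<dots> = emeasure (convolution P G) A"
      using prob_space_P \<open>prob_space G\<close>
      by (subst convolution_emeasure') (auto simp: G_def P_eq_density prob_space.finite_measure)
    finally show "emeasure opt_marginal A = emeasure (convolution P G) A" .
  qed
qed

lemma some_axis_eq: "(SOME j. axis i (1::real) = axis j 1) = i"
  by (rule some_equality) (auto simp: axis_eq_axis)

lemma prod_Basis_vec:
  fixes F :: "real^'d \<Rightarrow> 'b::comm_monoid_mult"
  shows "(\<Prod>b\<in>Basis. F b) = (\<Prod>i\<in>UNIV. F (axis i 1))"
proof -
  have "inj (\<lambda>i::'d. axis i (1::real))"
    by (auto simp: inj_def axis_eq_axis)
  moreover have "(Basis :: (real^'d) set) = range (\<lambda>i. axis i 1)"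
    unfolding Basis_vec_def by auto
  ultimately show ?thesis
    using prod.reindex[of "\<lambda>i::'d. axis i (1::real)" UNIV F] by simp
qed

lemma nn_integral_vec_prod:
  fixes h :: "'d::finite \<Rightarrow> real \<Rightarrow> real"
  assumes [measurable]: "\<And>i. h i \<in> borel_measurable borel" and h_nonneg: "\<And>i t. 0 \<le> h i t"
  shows "(\<integral>\<^sup>+z. ennreal (\<Prod>i\<in>UNIV. h i (z $ i)) \<partial>(lborel :: (real^'d) measure))
    = (\<Prod>i\<in>UNIV. \<integral>\<^sup>+t. ennreal (h i t) \<partial>lborel)"
proof -
  define f where "f b t = ennreal (h (SOME i. b = axis i 1) t)" for b :: "real^'d" and t
  have f_axis: "f (axis i 1) = (\<lambda>t. ennreal (h i t))" for i
    by (simp add: f_def some_axis_eq fun_eq_iff)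
  have "(\<integral>\<^sup>+z. ennreal (\<Prod>i\<in>UNIV. h i (z $ i)) \<partial>(lborel :: (real^'d) measure))
      = (\<integral>\<^sup>+z. (\<Prod>b\<in>Basis. f b (z \<bullet> b)) \<partial>lborel)"
    by (simp add: prod_Basis_vec f_axis inner_axis prod_ennreal h_nonneg prod_nonneg)
  also have "\<dots> = (\<Prod>b\<in>Basis. integral\<^sup>N lborel (f b))"
    by (rule nn_integral_lborel_prod) (auto simp: f_def)
  also have "\<dots> = (\<Prod>i\<in>UNIV. \<integral>\<^sup>+t. ennreal (h i t) \<partial>lborel)"
    by (simp add: prod_Basis_vec f_axis)
  finally show ?thesis .
qed

lemma norm_vec_sq: "(norm (z :: real^'d))\<^sup>2 = (\<Sum>i\<in>UNIV. (z $ i)\<^sup>2)"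
  unfolding norm_vec_def L2_set_def by (simp add: sum_nonneg)

definition gaussian_iso_density :: "real \<Rightarrow> real^'d \<Rightarrow> real" where
  "gaussian_iso_density \<epsilon> z = (\<Prod>i\<in>UNIV. normal_density 0 (sqrt (\<epsilon> / 2)) (z $ i))"

lemma gaussian_iso_eq_density:
  "gaussian_iso \<epsilon> = density lborel (\<lambda>x. ennreal (gaussian_iso_density \<epsilon> x))"
  unfolding gaussian_iso_def gaussian_iso_density_def ..

lemma gaussian_iso_density_measurable[measurable]:
  "gaussian_iso_density \<epsilon> \<in> borel_measurable borel"
  unfolding gaussian_iso_density_def by measurable

lemma gaussian_iso_density_pos: "0 < \<epsilon> \<Longrightarrow> 0 < gaussian_iso_density \<epsilon> z"
  unfolding gaussian_iso_density_def by (intro prod_pos) (auto intro!: normal_density_pos)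

lemma nn_integral_gaussian_iso_density:
  assumes "0 < \<epsilon>"
  shows "(\<integral>\<^sup>+z. ennreal (gaussian_iso_density \<epsilon> z) \<partial>(lborel :: (real^'d) measure)) = 1"
proof -
  have "(\<integral>\<^sup>+t. ennreal (normal_density 0 (sqrt (\<epsilon> / 2)) t) \<partial>lborel) = 1"
    using assms by (subst nn_integral_eq_integral) (auto intro!: integrable_normal_density)
  then show ?thesis
    unfolding gaussian_iso_density_def by (subst nn_integral_vec_prod) auto
qed

lemma ln_gaussian_iso_density:
  assumes "0 < \<epsilon>"
  shows "ln (gaussian_iso_density \<epsilon> (z :: real^'d))
    = - (norm z)\<^sup>2 / \<epsilon> - real CARD('d) * ln (sqrt (pi * \<epsilon>))"
proof -
  have "normal_density 0 (sqrt (\<epsilon> / 2)) t = exp (- t\<^sup>2 / \<epsilon>) / sqrt (pi * \<epsilon>)" for t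
    using assms by (simp add: normal_density_def)
  then have ln_normal: "ln (normal_density 0 (sqrt (\<epsilon> / 2)) t) = - t\<^sup>2 / \<epsilon> - ln (sqrt (pi * \<epsilon>))" for t
    using assms by (simp add: ln_div)
  have "ln (gaussian_iso_density \<epsilon> z) = (\<Sum>i\<in>UNIV. ln (normal_density 0 (sqrt (\<epsilon> / 2)) (z $ i)))"
    unfolding gaussian_iso_density_def using assms
    by (subst ln_prod) (auto simp: normal_density_pos[THEN less_imp_neq, THEN not_sym])
  also have "\<dots> = - (norm z)\<^sup>2 / \<epsilon> - real CARD('d) * ln (sqrt (pi * \<epsilon>))"
    by (simp add: ln_normal norm_vec_sq sum_subtractf sum_divide_distrib[symmetric] sum_negf)
  finally show ?thesis .
qed

lemma nn_integral_gaussian_iso_density_norm_sq: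
  assumes "0 < \<epsilon>"
  shows "(\<integral>\<^sup>+z. ennreal (gaussian_iso_density \<epsilon> z * (norm z)\<^sup>2) \<partial>(lborel :: (real^'d) measure)) < \<infinity>"
proof -
  define h where "h j i t = normal_density 0 (sqrt (\<epsilon> / 2)) t * (if i = j then t\<^sup>2 else 1)"
    for j i :: 'd and t
  have h_nonneg: "0 \<le> h j i t" for j i t
    by (simp add: h_def)
  have moment_eq: "gaussian_iso_density \<epsilon> z * (norm z)\<^sup>2 = (\<Sum>j\<in>UNIV. \<Prod>i\<in>UNIV. h j i (z $ i))"
    for z :: "real^'d"
  proof -
    have "(\<Prod>i\<in>UNIV. h j i (z $ i)) = gaussian_iso_density \<epsilon> z * (z $ j)\<^sup>2" for j
      unfolding h_def gaussian_iso_density_def prod.distrib by (simp add: prod.If_cases)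
    then show ?thesis by (simp add: norm_vec_sq sum_distrib_left)
  qed
  have "(\<integral>\<^sup>+z. ennreal (gaussian_iso_density \<epsilon> z * (norm z)\<^sup>2) \<partial>(lborel :: (real^'d) measure))
      = (\<integral>\<^sup>+z. (\<Sum>j\<in>UNIV. ennreal (\<Prod>i\<in>UNIV. h j i (z $ i))) \<partial>lborel)"
    unfolding moment_eq by (intro nn_integral_cong sum_ennreal[symmetric]) (simp add: h_nonneg prod_nonneg)
  also have "\<dots> = (\<Sum>j\<in>UNIV. \<integral>\<^sup>+z. ennreal (\<Prod>i\<in>UNIV. h j i (z $ i)) \<partial>(lborel :: (real^'d) measure))"
    by (intro nn_integral_sum) (simp add: h_def)
  also have "\<dots> = (\<Sum>j\<in>UNIV. \<Prod>i\<in>UNIV. \<integral>\<^sup>+t. ennreal (h j i t) \<partial>lborel)"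
    by (intro sum.cong refl nn_integral_vec_prod) (auto simp: h_def)
  also have "\<dots> < \<infinity>"
  proof -
    have "integrable lborel (\<lambda>t. normal_density 0 (sqrt (\<epsilon> / 2)) t * (t - 0)\<^sup>2)"
      using assms by (intro integrable_normal_moment) auto
    then have "(\<integral>\<^sup>+t. ennreal (h j i t) \<partial>lborel) < \<infinity>" for i j
      using assms by (cases "i = j") (simp_all add: h_def nn_integral_eq_integral)
    then show ?thesis
      by (simp add: ennreal_sum_less_top ennreal_prod_eq_top top.not_eq_extremum[symmetric])
  qed
  finally show ?thesis .
qed

lemma entropic_ot_setting_gaussian_iso:
  fixes P :: "(real^'d) measure"
  assumes "0 < \<epsilon>" "prob_space P" "has_leb_density P rP" "integrable P (\<lambda>x. ln (rP x))"
  shows "entropic_ot_setting \<epsilon> P rP (gaussian_iso_density \<epsilon>) (real CARD('d) * ln (sqrt (pi * \<epsilon>)))"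
  unfolding entropic_ot_setting_def using assms
  by (simp add: gaussian_iso_density_pos nn_integral_gaussian_iso_density ln_gaussian_iso_density
      nn_integral_gaussian_iso_density_norm_sq[unfolded infinity_ennreal_def])

theorem theorem3:
  fixes \<epsilon> :: real and P :: "(real ^ 'd) measure" and rP :: "real ^ 'd \<Rightarrow> real"
  assumes eps: "\<epsilon> > 0"
    and probP: "is_prob P"
    and densP: "has_leb_density P rP"
    and logint: "integrable P (\<lambda>x. ln (rP x))"
  shows "is_prob (convolution P (gaussian_iso \<epsilon>))
     \<and> (\<forall>Q. is_prob Q \<longrightarrow> entropic_W2 \<epsilon> P (convolution P (gaussian_iso \<epsilon>)) \<le> entropic_W2 \<epsilon> P Q)
     \<and> (\<forall>Q. is_prob Q \<and> entropic_W2 \<epsilon> P Q \<le> entropic_W2 \<epsilon> P (convolution P (gaussian_iso \<epsilon>))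
            \<longrightarrow> Q = convolution P (gaussian_iso \<epsilon>))"
proof -
  have setting: "entropic_ot_setting \<epsilon> P rP (gaussian_iso_density \<epsilon>) (real CARD('d) * ln (sqrt (pi * \<epsilon>)))"
    using probP unfolding is_prob_def by (intro entropic_ot_setting_gaussian_iso eps densP logint) simp
  interpret entropic_ot_setting \<epsilon> P rP "gaussian_iso_density \<epsilon>" "real CARD('d) * ln (sqrt (pi * \<epsilon>))"
    by (rule setting)
  have "opt_marginal = convolution P (gaussian_iso \<epsilon>)"
    unfolding gaussian_iso_eq_density by (rule opt_marginal_eq_convolution[OF setting])
  then show ?thesis
    using opt_marginal_unique_minimizer by simp
qed

end
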